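(* Let $f(u)=|u|^{p-1}u$ with $p>1$, and fix $\beta<2$. Then $$d(\beta,c)=O\Big((c_*-c)^{\frac{p+3}{2(p-1)}}\Big)\qquad\text{as } c\to c_*^-.$$
   Context: Setting: $F(s)=\int_0^sf=|s|^{p+1}/(p+1)$, and $c_*=\sqrt{1-\beta_+^2/4}$ with $\beta_+=\max\{\beta,0\}$. Definitions, for $c^2<1$ and $\beta<2\sqrt{1-c^2}$: - $I(u)=\int u_{xx}^2-\beta u_x^2+(1-c^2)u^2\,dx$ and $K(u)=(p+1)\int F(u)\,dx$. - $m(\beta,c)=\inf\{I(u)/K(u)^{2/(p+1)}:u\in H^2(\mathbb R),u\ne0\}$. - $d(\beta,c)=\frac{p-1}{2(p+1)}m(\beta,c)^{(p+1)/(p-1)}$. Equivalently $d=E(\vec\varphi)+cQ(\vec\varphi)$ at any ground state $\vec\varphi=(\varphi,-c\varphi)$, where $E(u,v)=\int\frac12(u_{xx}^2-\beta u_x^2+u^2+v^2)-F(u)$ and $Q(u,v)=\int uv$. *)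

theory Defs
  imports "HOL-Analysis.Analysis" "HOL-Library.Landau_Symbols"
begin

text \<open>Elements of H^2(R), represented by their (C^1) continuous representative u,
  its classical derivative u1 (locally absolutely continuous) and the weak second
  derivative u2, with u, u1, u2 all in L^2(R).\<close>
definition H2_triple :: "(real \<Rightarrow> real) \<Rightarrow> (real \<Rightarrow> real) \<Rightarrow> (real \<Rightarrow> real) \<Rightarrow> bool" where
  "H2_triple u u1 u2 \<longleftrightarrow>
     (\<forall>x. (u has_real_derivative u1 x) (at x)) \<and>
     u2 \<in> borel_measurable lborel \<and>
     (\<forall>x y. x \<le> y \<longrightarrow> set_integrable lborel {x..y} u2 \<and>
                        u1 y - u1 x = (LBINT t:{x..y}. u2 t)) \<and>
     integrable lborel (\<lambda>x. (u x)^2) \<and>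
     integrable lborel (\<lambda>x. (u1 x)^2) \<and>
     integrable lborel (\<lambda>x. (u2 x)^2)"

definition Fnl :: "real \<Rightarrow> real \<Rightarrow> real" where
  "Fnl p s = \<bar>s\<bar> powr (p + 1) / (p + 1)"

definition I_fun :: "real \<Rightarrow> real \<Rightarrow> (real \<Rightarrow> real) \<Rightarrow> (real \<Rightarrow> real) \<Rightarrow> (real \<Rightarrow> real) \<Rightarrow> real" where
  "I_fun \<beta> c u u1 u2 = (LINT x|lborel. (u2 x)^2 - \<beta> * (u1 x)^2 + (1 - c^2) * (u x)^2)"

definition K_fun :: "real \<Rightarrow> (real \<Rightarrow> real) \<Rightarrow> real" where
  "K_fun p u = (p + 1) * (LINT x|lborel. Fnl p (u x))"

definition m_fun :: "real \<Rightarrow> real \<Rightarrow> real \<Rightarrow> real" where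
  "m_fun p \<beta> c = Inf {I_fun \<beta> c u u1 u2 / (K_fun p u) powr (2 / (p + 1)) | u u1 u2.
                        H2_triple u u1 u2 \<and> u \<noteq> (\<lambda>_. 0)}"

definition d_fun :: "real \<Rightarrow> real \<Rightarrow> real \<Rightarrow> real" where
  "d_fun p \<beta> c = (p - 1) / (2 * (p + 1)) * (m_fun p \<beta> c) powr ((p + 1) / (p - 1))"

definition cstar :: "real \<Rightarrow> real" where
  "cstar \<beta> = sqrt (1 - (max \<beta> 0)^2 / 4)"

end

theory Submission
  imports Defs "HOL-Probability.Distributions"
begin

text \<open>
  Since d is an increasing function of the infimum m of the Weinstein quotient I(u)/K(u)^(2/(p+1)),
  it suffices to exhibit good test functions.  We use wave packets
  exp(-(e x)^2/4) cos(k x - \<theta>) at the critical frequency k = sqrt(b/2), b = max \<beta> 0, and of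
  width 1/e with e^2 = \<delta> = 1 - c^2 - b^2/4.  Adding the two phases \<theta> = 0 and \<theta> = \<pi>/2 removes
  the oscillation: the quadratic forms add up to O(e^2 + \<delta>)/e = O(e), while the nonlinear terms
  add up to at least a constant times 1/e.  Hence m = O(e^(1 + 2/(p+1))), and since
  \<delta> \<le> 2 (cstar \<beta> - c) this yields the claimed rate for d.
\<close>

text \<open>The first derivative of an H^2 triple is continuous, being an indefinite
  integral of the locally integrable second derivative.\<close>
lemma H2_deriv_continuous:
  assumes H: "H2_triple u u1 u2"
  shows "isCont u1 z"
proof -
  define a b where "a = z - 1" and "b = z + 1"
  have ftc: "\<And>x y. x \<le> y \<Longrightarrow> set_integrable lborel {x..y} u2 \<and> u1 y - u1 x = (LBINT t:{x..y}. u2 t)"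
    using H unfolding H2_triple_def by blast
  have "a \<le> b" by (simp add: a_def b_def)
  then have int_ab: "u2 integrable_on {a..b}"
    using ftc set_borel_integral_eq_integral(1) by blast
  have eq: "u1 t = u1 a + integral {a..t} u2" if "t \<in> {a..b}" for t
  proof -
    from that ftc[of a t] have "set_integrable lborel {a..t} u2" "u1 t - u1 a = (LBINT s:{a..t}. u2 s)"
      by auto
    then show ?thesis using set_borel_integral_eq_integral(2) by force
  qed
  have "continuous_on {a..b} (\<lambda>t. u1 a + integral {a..t} u2)"
    by (intro continuous_intros indefinite_integral_continuous_1 int_ab)
  then have "continuous_on {a..b} u1" using continuous_on_eq eq by (metis (no_types, lifting))
  moreover have "z \<in> interior {a..b}" by (simp add: a_def b_def)
  ultimately show ?thesis using continuous_on_interior by blast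
qed

lemma H2_regularity:
  assumes H: "H2_triple u u1 u2"
  shows "continuous_on UNIV u" "continuous_on UNIV u1"
    "u \<in> borel_measurable borel" "u1 \<in> borel_measurable borel" "u2 \<in> borel_measurable borel"
proof -
  have "\<And>x. (u has_real_derivative u1 x) (at x)" using H unfolding H2_triple_def by blast
  then show cu: "continuous_on UNIV u" by (meson DERIV_isCont continuous_at_imp_continuous_on)
  show cu1: "continuous_on UNIV u1"
    using H2_deriv_continuous[OF H] by (simp add: continuous_at_imp_continuous_on)
  show "u \<in> borel_measurable borel" "u1 \<in> borel_measurable borel"
    using cu cu1 borel_measurable_continuous_onI by blast+
  show "u2 \<in> borel_measurable borel" using H unfolding H2_triple_def by simp
qed

lemma H2_integral_deriv:
  assumes H: "H2_triple u u1 u2" and ab: "a \<le> b"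
  shows "(LBINT s:{a..b}. u1 s) = u b - u a"
proof -
  have "\<And>x. (u has_real_derivative u1 x) (at x)" using H unfolding H2_triple_def by blast
  then have "\<And>x. (u has_vector_derivative u1 x) (at x within {a..b})"
    using has_real_derivative_iff_has_vector_derivative has_vector_derivative_at_within by blast
  then show ?thesis unfolding set_lebesgue_integral_def
    using integral_FTC_atLeastAtMost[OF ab] continuous_on_subset[OF H2_regularity(2)[OF H]] by blast
qed

lemma abs_mult_le_half_squares: "\<bar>a * b\<bar> \<le> (a^2 + b^2) / 2" for a b :: real
proof -
  have "0 \<le> (\<bar>a\<bar> - \<bar>b\<bar>)^2" by simp
  then have "2 * (\<bar>a\<bar> * \<bar>b\<bar>) \<le> \<bar>a\<bar>^2 + \<bar>b\<bar>^2" by (simp add: power2_diff)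
  then show ?thesis by (simp add: abs_mult)
qed

lemma integrable_product_of_squares:
  fixes f g :: "real \<Rightarrow> real"
  assumes "f \<in> borel_measurable borel" "g \<in> borel_measurable borel"
    and "integrable lborel (\<lambda>t. (f t)^2)" "integrable lborel (\<lambda>t. (g t)^2)"
  shows "integrable lborel (\<lambda>t. f t * g t)"
  by (rule Bochner_Integration.integrable_bound[where f="\<lambda>t. ((f t)^2 + (g t)^2) / 2"])
     (use assms abs_mult_le_half_squares in auto)

text \<open>Dirichlet's formula: exchanging the order of integration over the triangle
  x \<le> t \<le> s \<le> y.  It replaces the product rule, which is not directly available
  for the merely weakly differentiable u1.\<close>
lemma triangle_fubini:
  fixes f g :: "real \<Rightarrow> real"
  assumes [measurable]: "f \<in> borel_measurable borel" "g \<in> borel_measurable borel"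
    and f: "set_integrable lborel {x..y} f" and g: "set_integrable lborel {x..y} g"
  shows "(LBINT s:{x..y}. f s * (LBINT t:{x..s}. g t)) = (LBINT t:{x..y}. g t * (LBINT s:{t..y}. f s))"
proof -
  define G where "G s t = (if x \<le> t \<and> t \<le> s \<and> s \<le> y then f s * g t else 0)" for s t
  define B where "B s t = (indicator {x..y} s * \<bar>f s\<bar>) * (indicator {x..y} t * \<bar>g t\<bar>)" for s t :: real
  have [measurable]: "(\<lambda>(s,t). G s t) \<in> borel_measurable (lborel \<Otimes>\<^sub>M lborel)"
    "(\<lambda>(s,t). B s t) \<in> borel_measurable (lborel \<Otimes>\<^sub>M lborel)"
    unfolding G_def B_def by measurable
  have fa: "integrable lborel (\<lambda>s. indicator {x..y} s * \<bar>f s\<bar>)"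
    and ga: "integrable lborel (\<lambda>t. indicator {x..y} t * \<bar>g t\<bar>)"
    using integrable_abs[OF f[unfolded set_integrable_def]] integrable_abs[OF g[unfolded set_integrable_def]]
    by (simp_all add: abs_mult)
  have "integrable (lborel \<Otimes>\<^sub>M lborel) (\<lambda>(s,t). B s t)"
  proof (rule lborel_pair.Fubini_integrable)
    have "(\<lambda>s. \<integral>t. norm (B s t) \<partial>lborel) = (\<lambda>s. (indicator {x..y} s * \<bar>f s\<bar>) * (\<integral>t. indicator {x..y} t * \<bar>g t\<bar> \<partial>lborel))"
      unfolding B_def by (auto simp: abs_mult)
    then show "integrable lborel (\<lambda>s. \<integral>t. norm (case (s,t) of (s,t) \<Rightarrow> B s t) \<partial>lborel)"
      using integrable_mult_left[OF fa] by simp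
    show "AE s in lborel. integrable lborel (\<lambda>t. case (s,t) of (s,t) \<Rightarrow> B s t)"
      unfolding B_def using integrable_mult_right[OF ga] by simp
  qed measurable
  then have "integrable (lborel \<Otimes>\<^sub>M lborel) (\<lambda>(s,t). G s t)"
    by (rule Bochner_Integration.integrable_bound) (auto simp: G_def B_def abs_mult split: split_indicator)
  then have swap: "(\<integral>t. \<integral>s. G s t \<partial>lborel \<partial>lborel) = (\<integral>s. \<integral>t. G s t \<partial>lborel \<partial>lborel)"
    using lborel_pair.Fubini_integral[of G] by simp
  have "(\<integral>t. G s t \<partial>lborel) = indicator {x..y} s * (f s * (LBINT t:{x..s}. g t))" for s
  proof (cases "x \<le> s \<and> s \<le> y")
    case True
    then have "(\<integral>t. G s t \<partial>lborel) = (\<integral>t. f s * (indicator {x..s} t *\<^sub>R g t) \<partial>lborel)"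
      by (intro Bochner_Integration.integral_cong) (auto simp: G_def split: split_indicator)
    with True show ?thesis by (simp add: set_lebesgue_integral_def)
  next
    case False
    then have "\<And>t. G s t = 0" by (auto simp: G_def)
    with False show ?thesis by simp
  qed
  moreover have "(\<integral>s. G s t \<partial>lborel) = indicator {x..y} t * (g t * (LBINT s:{t..y}. f s))" for t
  proof (cases "x \<le> t \<and> t \<le> y")
    case True
    then have "(\<integral>s. G s t \<partial>lborel) = (\<integral>s. g t * (indicator {t..y} s *\<^sub>R f s) \<partial>lborel)"
      by (intro Bochner_Integration.integral_cong) (auto simp: G_def split: split_indicator)
    with True show ?thesis by (simp add: set_lebesgue_integral_def)
  next
    case False
    then have "\<And>s. G s t = 0" by (auto simp: G_def)
    with False show ?thesis by simp
  qed
  ultimately show ?thesis using swap by (simp add: set_lebesgue_integral_def)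
qed

lemma H2_integrable_products:
  assumes H: "H2_triple u u1 u2"
  shows "integrable lborel (\<lambda>t. u t * u1 t)" "integrable lborel (\<lambda>t. u t * u2 t)"
  using H2_regularity[OF H] H unfolding H2_triple_def by (auto intro!: integrable_product_of_squares)

lemma H2_parts_interval:
  assumes H: "H2_triple u u1 u2" and xy: "x \<le> y"
  shows "(LBINT t:{x..y}. u t * u2 t) = u y * u1 y - u x * u1 x - (LBINT t:{x..y}. (u1 t)^2)"
proof -
  note reg = H2_regularity[OF H]
  have ftc: "\<And>s. x \<le> s \<Longrightarrow> set_integrable lborel {x..s} u2 \<and> u1 s - u1 x = (LBINT t:{x..s}. u2 t)"
    using H unfolding H2_triple_def by blast
  have i1: "set_integrable lborel {x..y} u1"
    by (rule borel_integrable_atLeastAtMost'[OF continuous_on_subset[OF reg(2)]]) simp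
  have i2: "set_integrable lborel {x..y} u2" using ftc[OF xy] by blast
  have i11: "set_integrable lborel {x..y} (\<lambda>t. (u1 t)^2)"
    and i02: "set_integrable lborel {x..y} (\<lambda>t. u t * u2 t)"
    using H H2_integrable_products[OF H] unfolding H2_triple_def set_integrable_def
    by (simp_all only: integrable_mult_indicator sets_lborel atLeastAtMost_borel)
  have "(LBINT s:{x..y}. u1 s * (LBINT t:{x..s}. u2 t)) = (LBINT s:{x..y}. (u1 s)^2 - u1 x * u1 s)"
  proof (intro set_lebesgue_integral_cong allI impI)
    fix s assume "s \<in> {x..y}"
    then have "(LBINT t:{x..s}. u2 t) = u1 s - u1 x" using ftc[of s] by simp
    then show "u1 s * (LBINT t:{x..s}. u2 t) = (u1 s)^2 - u1 x * u1 s"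
      by (simp add: power2_eq_square right_diff_distrib)
  qed simp
  also have "\<dots> = (LBINT s:{x..y}. (u1 s)^2) - u1 x * (u y - u x)"
    using i11 i1 H2_integral_deriv[OF H xy] by simp
  finally have lhs: "(LBINT s:{x..y}. u1 s * (LBINT t:{x..s}. u2 t)) = \<dots>" .
  have "(LBINT t:{x..y}. u2 t * (LBINT s:{t..y}. u1 s)) = (LBINT t:{x..y}. u y * u2 t - u t * u2 t)"
  proof (intro set_lebesgue_integral_cong allI impI)
    fix t assume "t \<in> {x..y}"
    then show "u2 t * (LBINT s:{t..y}. u1 s) = u y * u2 t - u t * u2 t"
      using H2_integral_deriv[OF H, of t y] by (simp add: right_diff_distrib mult.commute)
  qed simp
  also have "\<dots> = u y * (u1 y - u1 x) - (LBINT t:{x..y}. u t * u2 t)"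
    using i2 i02 ftc[OF xy] by simp
  finally have rhs: "(LBINT t:{x..y}. u2 t * (LBINT s:{t..y}. u1 s)) = \<dots>" .
  show ?thesis using triangle_fubini[OF reg(4,5) i1 i2] lhs rhs by (simp add: algebra_simps)
qed

lemma integrable_small_values:
  fixes h :: "real \<Rightarrow> real"
  assumes hi: "integrable lborel h" and e: "e > 0"
  shows "\<exists>y\<ge>N. \<bar>h y\<bar> < e" "\<exists>y\<le>N. \<bar>h y\<bar> < e"
proof -
  have ha: "integrable lborel (\<lambda>t. \<bar>h t\<bar>)" using hi by simp
  define M where "M = (\<integral>t. \<bar>h t\<bar> \<partial>lborel) / e + 1"
  have "0 \<le> (\<integral>t. \<bar>h t\<bar> \<partial>lborel)" by (rule integral_nonneg_AE) simp
  then have Mpos: "M > 0" using e by (simp add: M_def add_nonneg_pos)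
  have "\<not> (\<forall>y\<in>S. e \<le> \<bar>h y\<bar>)" if S: "S = {N..N+M} \<or> S = {N-M..N}" for S
  proof
    assume large: "\<forall>y\<in>S. e \<le> \<bar>h y\<bar>"
    have "set_integrable lborel S (\<lambda>_. e)"
      using S by (auto intro!: borel_integrable_atLeastAtMost')
    then have "(\<integral>t. indicator S t * e \<partial>lborel) \<le> (\<integral>t. \<bar>h t\<bar> \<partial>lborel)"
      by (intro integral_mono ha) (use large in \<open>auto simp: set_integrable_def split: split_indicator\<close>)
    moreover have "(\<integral>t. indicator S t * e \<partial>lborel) = M * e" using S Mpos by auto
    moreover have "M * e = (\<integral>t. \<bar>h t\<bar> \<partial>lborel) + e" using e by (simp add: M_def field_simps)
    ultimately show False using e by simp
  qed
  then have "\<exists>y\<in>{N..N+M}. \<bar>h y\<bar> < e" "\<exists>y\<in>{N-M..N}. \<bar>h y\<bar> < e"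
    by (auto simp: not_le)
  then show "\<exists>y\<ge>N. \<bar>h y\<bar> < e" "\<exists>y\<le>N. \<bar>h y\<bar> < e" by auto
qed

text \<open>If an integrable function h is a primitive of an integrable G, then the total
  integral of G vanishes: h must tend to 0 along sequences going to both infinities.\<close>
lemma integral_eq_zero_of_integrable_primitive:
  fixes h G :: "real \<Rightarrow> real"
  assumes hi: "integrable lborel h" and Gi: "integrable lborel G"
    and prim: "\<And>x y. x \<le> y \<Longrightarrow> h y - h x = (LBINT t:{x..y}. G t)"
  shows "(\<integral>t. G t \<partial>lborel) = 0"
proof -
  have "\<forall>n. \<exists>y. y \<ge> real n \<and> \<bar>h y\<bar> < inverse (real (Suc n))"
    "\<forall>n. \<exists>y. y \<le> - real n \<and> \<bar>h y\<bar> < inverse (real (Suc n))"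
    using integrable_small_values[OF hi] by simp_all
  then obtain ys xs where ys: "\<And>n. ys n \<ge> real n \<and> \<bar>h (ys n)\<bar> < inverse (real (Suc n))"
    and xs: "\<And>n. xs n \<le> - real n \<and> \<bar>h (xs n)\<bar> < inverse (real (Suc n))"
    unfolding choice_iff by blast
  have "(\<lambda>n. LBINT t:{xs n..ys n}. G t) \<longlonglongrightarrow> (\<integral>t. G t \<partial>lborel)"
    unfolding set_lebesgue_integral_def
  proof (rule integral_dominated_convergence[where w="\<lambda>t. \<bar>G t\<bar>"])
    show "AE t in lborel. (\<lambda>n. indicator {xs n..ys n} t *\<^sub>R G t) \<longlonglongrightarrow> G t"
    proof (rule AE_I2, rule tendsto_eventually, rule eventually_sequentiallyI)
      fix t :: real and n :: nat assume "nat \<lceil>\<bar>t\<bar>\<rceil> \<le> n"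
      then have "t \<in> {xs n..ys n}" using xs[of n] ys[of n] by auto
      then show "indicator {xs n..ys n} t *\<^sub>R G t = G t" by simp
    qed
  qed (use Gi in \<open>auto split: split_indicator\<close>)
  moreover have "(\<lambda>n. h (ys n) - h (xs n)) \<longlonglongrightarrow> 0"
  proof (rule Lim_null_comparison)
    show "\<forall>\<^sub>F n in sequentially. norm (h (ys n) - h (xs n)) \<le> 2 * inverse (real (Suc n))"
      using xs ys by (intro always_eventually allI) (smt (verit) real_norm_def)
    show "(\<lambda>n. 2 * inverse (real (Suc n))) \<longlonglongrightarrow> 0"
      using tendsto_mult_right_zero[OF LIMSEQ_inverse_real_of_nat] by simp
  qed
  moreover have "xs n \<le> ys n" for n using xs[of n] ys[of n] by (smt (verit) of_nat_0_le_iff)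
  ultimately show ?thesis using LIMSEQ_unique prim by simp
qed

lemma H2_parts:
  assumes H: "H2_triple u u1 u2"
  shows "(\<integral>t. (u1 t)^2 \<partial>lborel) = - (\<integral>t. u t * u2 t \<partial>lborel)"
proof -
  have i: "integrable lborel (\<lambda>t. (u1 t)^2)" "integrable lborel (\<lambda>t. u t * u2 t)"
    using H H2_integrable_products[OF H] unfolding H2_triple_def by auto
  have "(\<integral>t. (u1 t)^2 + u t * u2 t \<partial>lborel) = 0"
  proof (rule integral_eq_zero_of_integrable_primitive)
    show "integrable lborel (\<lambda>t. u t * u1 t)" by (rule H2_integrable_products[OF H])
    fix x y :: real assume xy: "x \<le> y"
    have "set_integrable lborel {x..y} (\<lambda>t. (u1 t)^2)" "set_integrable lborel {x..y} (\<lambda>t. u t * u2 t)"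
      using i unfolding set_integrable_def
      by (simp_all only: integrable_mult_indicator sets_lborel atLeastAtMost_borel)
    then show "u y * u1 y - u x * u1 x = (LBINT t:{x..y}. (u1 t)^2 + u t * u2 t)"
      using H2_parts_interval[OF H xy] by simp
  qed (use i in simp)
  then show ?thesis using i by simp
qed

text \<open>The quadratic form I is nonnegative below the threshold: for \<beta> > 0 the middle term is
  controlled by \<beta> \<integral> u1^2 = - \<beta> \<integral> u u2 \<le> \<integral> u2^2 + \<beta>^2/4 \<integral> u^2.\<close>
lemma I_nonneg:
  assumes H: "H2_triple u u1 u2" and bc: "(max \<beta> 0)^2 / 4 \<le> 1 - c^2"
  shows "0 \<le> I_fun \<beta> c u u1 u2"
proof -
  have i: "integrable lborel (\<lambda>t. (u t)^2)" "integrable lborel (\<lambda>t. (u1 t)^2)"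
    "integrable lborel (\<lambda>t. (u2 t)^2)" "integrable lborel (\<lambda>t. u t * u2 t)"
    using H H2_integrable_products[OF H] unfolding H2_triple_def by auto
  have I_split: "I_fun \<beta> c u u1 u2 = (\<integral>t. (u2 t)^2 \<partial>lborel) - \<beta> * (\<integral>t. (u1 t)^2 \<partial>lborel)
      + (1 - c^2) * (\<integral>t. (u t)^2 \<partial>lborel)"
    unfolding I_fun_def using i by simp
  have nonneg: "0 \<le> (\<integral>t. (u t)^2 \<partial>lborel)" "0 \<le> (\<integral>t. (u1 t)^2 \<partial>lborel)" "0 \<le> (\<integral>t. (u2 t)^2 \<partial>lborel)"
    by (auto intro!: integral_nonneg_AE)
  have "0 \<le> 1 - c^2" using bc by (smt (verit) divide_nonneg_pos zero_le_power2)
  show ?thesis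
  proof (cases "\<beta> \<le> 0")
    case True
    then show ?thesis unfolding I_split using nonneg \<open>0 \<le> 1 - c^2\<close>
      by (smt (verit) mult_nonneg_nonneg mult_nonpos_nonneg)
  next
    case False
    then have b2: "\<beta>^2 / 4 \<le> 1 - c^2" using bc by simp
    have "- \<beta> * (u t * u2 t) \<le> (u2 t)^2 + (\<beta>^2/4) * (u t)^2" for t
    proof -
      have "0 \<le> (u2 t + \<beta>/2 * u t)^2" by simp
      then show ?thesis by (simp add: power2_eq_square algebra_simps)
    qed
    then have "(\<integral>t. - \<beta> * (u t * u2 t) \<partial>lborel) \<le> (\<integral>t. (u2 t)^2 + (\<beta>^2/4) * (u t)^2 \<partial>lborel)"
      by (intro integral_mono) (use i in auto)
    then have "\<beta> * (\<integral>t. (u1 t)^2 \<partial>lborel) \<le> (\<integral>t. (u2 t)^2 \<partial>lborel) + (\<beta>^2/4) * (\<integral>t. (u t)^2 \<partial>lborel)"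
      using i H2_parts[OF H] by simp
    moreover have "(\<beta>^2/4) * (\<integral>t. (u t)^2 \<partial>lborel) \<le> (1 - c^2) * (\<integral>t. (u t)^2 \<partial>lborel)"
      using b2 nonneg(1) by (rule mult_right_mono)
    ultimately show ?thesis unfolding I_split by linarith
  qed
qed

lemma m_fun_bounds:
  assumes bc: "(max \<beta> 0)^2 / 4 \<le> 1 - c^2"
    and H: "H2_triple u u1 u2" and u0: "u \<noteq> (\<lambda>_. 0)"
  shows "0 \<le> m_fun p \<beta> c" "m_fun p \<beta> c \<le> I_fun \<beta> c u u1 u2 / (K_fun p u) powr (2 / (p + 1))"
proof -
  define R where "R = {I_fun \<beta> c u u1 u2 / (K_fun p u) powr (2 / (p + 1)) | u u1 u2.
                        H2_triple u u1 u2 \<and> u \<noteq> (\<lambda>_. 0)}"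
  have m: "m_fun p \<beta> c = Inf R" unfolding m_fun_def R_def by simp
  have nonneg: "\<And>r. r \<in> R \<Longrightarrow> 0 \<le> r"
    unfolding R_def using I_nonneg[OF _ bc] by (auto intro!: divide_nonneg_nonneg)
  have mem: "I_fun \<beta> c u u1 u2 / (K_fun p u) powr (2 / (p + 1)) \<in> R"
    unfolding R_def using H u0 by blast
  show "0 \<le> m_fun p \<beta> c" unfolding m using mem nonneg by (intro cInf_greatest) auto
  show "m_fun p \<beta> c \<le> I_fun \<beta> c u u1 u2 / (K_fun p u) powr (2 / (p + 1))"
    unfolding m by (rule cInf_lower[OF mem]) (use nonneg in \<open>auto simp: bdd_below_def\<close>)
qed

lemma K_fun_eq:
  assumes p: "p > 1"
  shows "K_fun p u = (\<integral>t. \<bar>u t\<bar> powr (p + 1) \<partial>lborel)"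
  unfolding K_fun_def Fnl_def using p by simp

text \<open>This is how the
  oscillating factors of the wave packets below are averaged out.\<close>
lemma m_fun_le_pair:
  assumes p: "p > 1" and bc: "(max \<beta> 0)^2 / 4 \<le> 1 - c^2"
    and Hu: "H2_triple u u1 u2" and Hv: "H2_triple v v1 v2"
    and \<kappa>: "\<kappa> > 0" and K: "2 * \<kappa> \<le> K_fun p u + K_fun p v"
  shows "m_fun p \<beta> c \<le> (I_fun \<beta> c u u1 u2 + I_fun \<beta> c v v1 v2) / \<kappa> powr (2 / (p + 1))"
proof -
  have "\<kappa> \<le> K_fun p u \<or> \<kappa> \<le> K_fun p v" using K by linarith
  then obtain w w1 w2 where Hw: "H2_triple w w1 w2" and Kw: "\<kappa> \<le> K_fun p w"
    and Iw: "I_fun \<beta> c w w1 w2 \<le> I_fun \<beta> c u u1 u2 + I_fun \<beta> c v v1 v2"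
    using Hu Hv I_nonneg[OF Hu bc] I_nonneg[OF Hv bc] by force
  have "w \<noteq> (\<lambda>_. 0)" using Kw \<kappa> by (auto simp: K_fun_eq[OF p])
  then have "m_fun p \<beta> c \<le> I_fun \<beta> c w w1 w2 / (K_fun p w) powr (2 / (p + 1))"
    by (rule m_fun_bounds(2)[OF bc Hw])
  also have "\<dots> \<le> (I_fun \<beta> c u u1 u2 + I_fun \<beta> c v v1 v2) / \<kappa> powr (2 / (p + 1))"
  proof (rule frac_le)
    show "0 \<le> I_fun \<beta> c u u1 u2 + I_fun \<beta> c v v1 v2" using I_nonneg[OF Hu bc] I_nonneg[OF Hv bc] by simp
    show "\<kappa> powr (2 / (p + 1)) \<le> K_fun p w powr (2 / (p + 1))"
      by (rule powr_mono2) (use p \<kappa> Kw in auto)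
  qed (use Iw \<kappa> in auto)
  finally show ?thesis .
qed

definition gauss :: "real \<Rightarrow> real" where "gauss t = exp (- (t^2) / 4)"
definition gauss_d1 :: "real \<Rightarrow> real" where "gauss_d1 t = - (t / 2) * gauss t"
definition gauss_d2 :: "real \<Rightarrow> real" where "gauss_d2 t = (t^2 / 4 - 1 / 2) * gauss t"

lemma gauss_has_derivative: "(gauss has_real_derivative gauss_d1 t) (at t)"
  unfolding gauss_def gauss_d1_def by (auto intro!: derivative_eq_intros simp: field_simps)

lemma gauss_d1_has_derivative: "(gauss_d1 has_real_derivative gauss_d2 t) (at t)"
  unfolding gauss_def gauss_d1_def gauss_d2_def
  by (auto intro!: derivative_eq_intros simp: field_simps power2_eq_square)

lemma gauss_chain [derivative_intros]:
  "(g has_real_derivative g') (at x) \<Longrightarrow> ((\<lambda>x. gauss (g x)) has_real_derivative gauss_d1 (g x) * g') (at x)"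
  "(g has_real_derivative g') (at x) \<Longrightarrow> ((\<lambda>x. gauss_d1 (g x)) has_real_derivative gauss_d2 (g x) * g') (at x)"
  using DERIV_chain2[OF gauss_has_derivative] DERIV_chain2[OF gauss_d1_has_derivative] by blast+

lemma gauss_continuous [continuous_intros]:
  "continuous_on S g \<Longrightarrow> continuous_on S (\<lambda>x. gauss (g x))"
  "continuous_on S g \<Longrightarrow> continuous_on S (\<lambda>x. gauss_d1 (g x))"
  "continuous_on S g \<Longrightarrow> continuous_on S (\<lambda>x. gauss_d2 (g x))"
  unfolding gauss_def gauss_d1_def gauss_d2_def by (auto intro!: continuous_intros)

lemma gauss_pos: "0 < gauss t" and gauss_le_1: "gauss t \<le> 1"
  unfolding gauss_def by auto

text \<open>All moments of gauss^2 = exp(-t^2/2) are finite (normal distribution moments).\<close>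
lemma integrable_gauss_sq_moment: "integrable lborel (\<lambda>t. (gauss t)^2 * t ^ j)"
proof -
  have sq: "(gauss t)^2 = exp (- (t^2) / 2)" for t
    unfolding gauss_def by (simp add: power2_eq_square exp_add[symmetric])
  have "integrable lborel (\<lambda>t. sqrt (2 * pi) * (std_normal_density t * t ^ j))"
    using integrable_std_normal_moment by simp
  then show ?thesis unfolding sq std_normal_density_def by simp
qed

lemma integrable_gauss_squares:
  "integrable lborel (\<lambda>t. (gauss t)^2)" "integrable lborel (\<lambda>t. (gauss_d1 t)^2)"
  "integrable lborel (\<lambda>t. (gauss_d2 t)^2)" "integrable lborel (\<lambda>t. gauss t * gauss_d2 t)"
proof -
  note m = integrable_gauss_sq_moment
  show "integrable lborel (\<lambda>t. (gauss t)^2)" using m[of 0] by simp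
  have "(\<lambda>t. (gauss_d1 t)^2) = (\<lambda>t. (1/4) * ((gauss t)^2 * t^2))"
    by (rule ext) (simp add: gauss_d1_def power_mult_distrib field_simps)
  then show "integrable lborel (\<lambda>t. (gauss_d1 t)^2)" using m by simp
  have "(\<lambda>t. (gauss_d2 t)^2)
      = (\<lambda>t. (1/16) * ((gauss t)^2 * t^4) - (1/4) * ((gauss t)^2 * t^2) + (1/4) * ((gauss t)^2 * t^0))"
    by (rule ext) (simp add: gauss_d2_def power_mult_distrib field_simps power2_eq_square power4_eq_xxxx)
  then show "integrable lborel (\<lambda>t. (gauss_d2 t)^2)"
    by (simp only:) (intro Bochner_Integration.integrable_add Bochner_Integration.integrable_diff integrable_mult_right m)
  have "(\<lambda>t. gauss t * gauss_d2 t) = (\<lambda>t. (1/4) * ((gauss t)^2 * t^2) - (1/2) * ((gauss t)^2 * t^0))"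
    by (rule ext) (simp add: gauss_d2_def field_simps power2_eq_square)
  then show "integrable lborel (\<lambda>t. gauss t * gauss_d2 t)"
    by (simp only:) (intro Bochner_Integration.integrable_diff integrable_mult_right m)
qed

definition packet :: "real \<Rightarrow> real \<Rightarrow> real \<Rightarrow> real \<Rightarrow> real" where
  "packet e k \<theta> x = gauss (e * x) * cos (k * x - \<theta>)"
definition packet_d1 :: "real \<Rightarrow> real \<Rightarrow> real \<Rightarrow> real \<Rightarrow> real" where
  "packet_d1 e k \<theta> x = e * gauss_d1 (e * x) * cos (k * x - \<theta>) - k * gauss (e * x) * sin (k * x - \<theta>)"
definition packet_d2 :: "real \<Rightarrow> real \<Rightarrow> real \<Rightarrow> real \<Rightarrow> real" where
  "packet_d2 e k \<theta> x = e^2 * gauss_d2 (e * x) * cos (k * x - \<theta>)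
     - 2 * e * k * gauss_d1 (e * x) * sin (k * x - \<theta>) - k^2 * gauss (e * x) * cos (k * x - \<theta>)"

lemma packet_has_derivative:
  "(packet e k \<theta> has_real_derivative packet_d1 e k \<theta> x) (at x)"
  "(packet_d1 e k \<theta> has_real_derivative packet_d2 e k \<theta> x) (at x)"
  unfolding packet_def packet_d1_def packet_d2_def
  by (auto intro!: derivative_eq_intros simp: algebra_simps power2_eq_square)

lemma packet_continuous:
  "continuous_on UNIV (packet e k \<theta>)" "continuous_on UNIV (packet_d1 e k \<theta>)"
  "continuous_on UNIV (packet_d2 e k \<theta>)"
  unfolding packet_def packet_d1_def packet_d2_def by (intro continuous_intros)+

lemma square_integrable_dominated:
  fixes f g h :: "real \<Rightarrow> real"
  assumes f: "continuous_on UNIV f"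
    and g: "integrable lborel (\<lambda>x. (g x)^2)" and h: "integrable lborel (\<lambda>x. (h x)^2)"
    and le: "\<And>x. \<bar>f x\<bar> \<le> \<bar>g x\<bar> + \<bar>h x\<bar>"
  shows "integrable lborel (\<lambda>x. (f x)^2)"
proof (rule Bochner_Integration.integrable_bound)
  show "integrable lborel (\<lambda>x. 2 * ((g x)^2 + (h x)^2))" using g h by simp
  show "(\<lambda>x. (f x)^2) \<in> borel_measurable lborel"
    using borel_measurable_continuous_onI[OF continuous_on_power[OF f]] by simp
  show "AE x in lborel. norm ((f x)^2) \<le> norm (2 * ((g x)^2 + (h x)^2))"
  proof (rule AE_I2)
    fix x
    have "\<bar>f x\<bar>^2 \<le> (\<bar>g x\<bar> + \<bar>h x\<bar>)^2" by (rule power_mono[OF le]) simp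
    then have "(f x)^2 \<le> (\<bar>g x\<bar> + \<bar>h x\<bar>)^2" by simp
    also have "\<dots> \<le> 2 * ((g x)^2 + (h x)^2)"
      using abs_mult_le_half_squares[of "g x" "h x"] by (simp add: power2_sum abs_mult)
    finally show "norm ((f x)^2) \<le> norm (2 * ((g x)^2 + (h x)^2))" by simp
  qed
qed

lemma abs_trig_factor_le: "\<bar>a * cos t\<bar> \<le> \<bar>a\<bar>" "\<bar>a * sin t\<bar> \<le> \<bar>a\<bar>" for a t :: real
  by (simp_all add: abs_mult mult_left_le)

lemma packet_envelopes:
  "\<bar>packet e k \<theta> x\<bar> \<le> \<bar>gauss (e * x)\<bar>"
  "\<bar>packet_d1 e k \<theta> x\<bar> \<le> \<bar>e * gauss_d1 (e * x)\<bar> + \<bar>k * gauss (e * x)\<bar>"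
  "\<bar>packet_d2 e k \<theta> x\<bar> \<le> \<bar>e^2 * gauss_d2 (e * x)\<bar>
      + \<bar>\<bar>2 * e * k * gauss_d1 (e * x)\<bar> + \<bar>k^2 * gauss (e * x)\<bar>\<bar>"
proof -
  note tri = abs_triangle_ineq4 abs_trig_factor_le
  show "\<bar>packet e k \<theta> x\<bar> \<le> \<bar>gauss (e * x)\<bar>" unfolding packet_def by (rule tri)
  show "\<bar>packet_d1 e k \<theta> x\<bar> \<le> \<bar>e * gauss_d1 (e * x)\<bar> + \<bar>k * gauss (e * x)\<bar>"
    unfolding packet_d1_def by (rule order_trans[OF tri(1) add_mono[OF tri(2,3)]])
  have "\<bar>packet_d2 e k \<theta> x\<bar> \<le> \<bar>e^2 * gauss_d2 (e * x)\<bar> + \<bar>2 * e * k * gauss_d1 (e * x)\<bar> + \<bar>k^2 * gauss (e * x)\<bar>"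
    unfolding packet_d2_def
    by (rule order_trans[OF tri(1) add_mono[OF order_trans[OF tri(1) add_mono[OF tri(2,3)]] tri(2)]])
  then show "\<bar>packet_d2 e k \<theta> x\<bar> \<le> \<bar>e^2 * gauss_d2 (e * x)\<bar>
      + \<bar>\<bar>2 * e * k * gauss_d1 (e * x)\<bar> + \<bar>k^2 * gauss (e * x)\<bar>\<bar>" by simp
qed

lemma packet_H2:
  assumes e: "e \<noteq> 0"
  shows "H2_triple (packet e k \<theta>) (packet_d1 e k \<theta>) (packet_d2 e k \<theta>)"
proof -
  have scaled: "integrable lborel (\<lambda>x. (a * gauss (e * x))^2)" "integrable lborel (\<lambda>x. (a * gauss_d1 (e * x))^2)"
    "integrable lborel (\<lambda>x. (a * gauss_d2 (e * x))^2)" for a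
  proof -
    have scale: "integrable lborel (\<lambda>x. f (e * x))" if "integrable lborel f" for f :: "real \<Rightarrow> real"
      using lborel_integrable_real_affine[OF that e, of 0] by simp
    show "integrable lborel (\<lambda>x. (a * gauss (e * x))^2)" "integrable lborel (\<lambda>x. (a * gauss_d1 (e * x))^2)"
      "integrable lborel (\<lambda>x. (a * gauss_d2 (e * x))^2)"
      using scale[OF integrable_gauss_squares(1)] scale[OF integrable_gauss_squares(2)]
        scale[OF integrable_gauss_squares(3)] by (simp_all add: power_mult_distrib)
  qed
  have ftc: "set_integrable lborel {x..y} (packet_d2 e k \<theta>)
      \<and> packet_d1 e k \<theta> y - packet_d1 e k \<theta> x = (LBINT t:{x..y}. packet_d2 e k \<theta> t)" if "x \<le> y" for x y
  proof
    show "set_integrable lborel {x..y} (packet_d2 e k \<theta>)"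
      by (rule borel_integrable_atLeastAtMost'[OF continuous_on_subset[OF packet_continuous(3)]]) simp
    show "packet_d1 e k \<theta> y - packet_d1 e k \<theta> x = (LBINT t:{x..y}. packet_d2 e k \<theta> t)"
      unfolding set_lebesgue_integral_def
      by (rule integral_FTC_atLeastAtMost[OF that _ continuous_on_subset[OF packet_continuous(3)], symmetric])
         (auto simp: has_real_derivative_iff_has_vector_derivative[symmetric]
           intro: has_field_derivative_at_within packet_has_derivative(2))
  qed
  have "integrable lborel (\<lambda>x. (packet e k \<theta> x)^2)"
    by (rule square_integrable_dominated[OF packet_continuous(1) scaled(1)[of 1] scaled(1)[of 0]])
       (use packet_envelopes(1) in simp)
  moreover have "integrable lborel (\<lambda>x. (packet_d1 e k \<theta> x)^2)"
    by (rule square_integrable_dominated[OF packet_continuous(2) scaled(2)[of e] scaled(1)[of k]])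
       (rule packet_envelopes(2))
  moreover have "integrable lborel (\<lambda>x. (packet_d2 e k \<theta> x)^2)"
  proof (rule square_integrable_dominated[OF packet_continuous(3) scaled(3)[of "e^2"]])
    show "integrable lborel (\<lambda>x. (\<bar>2 * e * k * gauss_d1 (e * x)\<bar> + \<bar>k^2 * gauss (e * x)\<bar>)^2)"
      by (rule square_integrable_dominated[OF _ scaled(2)[of "2 * e * k"] scaled(1)[of "k^2"]])
         (intro continuous_intros, simp)
    show "\<bar>packet_d2 e k \<theta> x\<bar> \<le> \<bar>e^2 * gauss_d2 (e * x)\<bar>
        + \<bar>\<bar>2 * e * k * gauss_d1 (e * x)\<bar> + \<bar>k^2 * gauss (e * x)\<bar>\<bar>" for x
      by (rule packet_envelopes(3))
  qed
  ultimately show ?thesis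
    unfolding H2_triple_def using packet_has_derivative ftc
      borel_measurable_continuous_onI[OF packet_continuous(3)] by auto
qed

text \<open>The integrand of I summed over the two phases \<theta> = 0 and \<theta> = \<pi>/2, written in the
  rescaled variable t = e x.  Summing the phases turns cos^2 + sin^2 into 1, so the oscillation
  disappears and only the Gaussian profile remains.\<close>
definition pair_density :: "real \<Rightarrow> real \<Rightarrow> real \<Rightarrow> real \<Rightarrow> real \<Rightarrow> real" where
  "pair_density e k \<beta> s t =
     e^2 * (e^2 * (gauss_d2 t)^2 - 2 * k^2 * (gauss t * gauss_d2 t) + (4 * k^2 - \<beta>) * (gauss_d1 t)^2)
     + (k^4 - \<beta> * k^2 + s) * (gauss t)^2"

lemma packet_pair_pointwise:
  fixes e k \<beta> s x :: real
  shows "((packet_d2 e k 0 x)^2 - \<beta> * (packet_d1 e k 0 x)^2 + s * (packet e k 0 x)^2)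
       + ((packet_d2 e k (pi/2) x)^2 - \<beta> * (packet_d1 e k (pi/2) x)^2 + s * (packet e k (pi/2) x)^2)
       = pair_density e k \<beta> s (e * x)"
proof -
  define C S where "C = cos (k * x)" and "S = sin (k * x)"
  define P Q R where "P = e^2 * gauss_d2 (e * x)" and "Q = 2 * e * k * gauss_d1 (e * x)"
    and "R = k^2 * gauss (e * x)"
  define U V W where "U = e * gauss_d1 (e * x)" and "V = k * gauss (e * x)" and "W = gauss (e * x)"
  have CS: "C^2 + S^2 = 1" unfolding C_def S_def by simp
  have shift: "cos (k * x - pi / 2) = S" "sin (k * x - pi / 2) = - C"
    by (simp_all add: cos_diff sin_diff C_def S_def)
  have eqs: "packet_d2 e k 0 x = P * C - Q * S - R * C" "packet_d2 e k (pi/2) x = P * S + Q * C - R * S"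
    "packet_d1 e k 0 x = U * C - V * S" "packet_d1 e k (pi/2) x = U * S + V * C"
    "packet e k 0 x = W * C" "packet e k (pi/2) x = W * S"
    unfolding packet_def packet_d1_def packet_d2_def shift
    by (simp_all add: P_def Q_def R_def U_def V_def W_def C_def S_def)
  have "((packet_d2 e k 0 x)^2 - \<beta> * (packet_d1 e k 0 x)^2 + s * (packet e k 0 x)^2)
       + ((packet_d2 e k (pi/2) x)^2 - \<beta> * (packet_d1 e k (pi/2) x)^2 + s * (packet e k (pi/2) x)^2)
       = (((P - R)^2 + Q^2) - \<beta> * (U^2 + V^2) + s * W^2) * (C^2 + S^2)"
    unfolding eqs by (simp add: power2_eq_square algebra_simps)
  also have "\<dots> = pair_density e k \<beta> s (e * x)"
    unfolding CS pair_density_def P_def Q_def R_def U_def V_def W_def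
    by (simp add: power2_eq_square algebra_simps power4_eq_xxxx)
  finally show ?thesis .
qed

lemma integrable_pair_density: "integrable lborel (pair_density e k \<beta> s)"
  unfolding pair_density_def using integrable_gauss_squares by simp

lemma packet_pair_I:
  assumes e: "e > 0"
  shows "I_fun \<beta> c (packet e k 0) (packet_d1 e k 0) (packet_d2 e k 0)
       + I_fun \<beta> c (packet e k (pi/2)) (packet_d1 e k (pi/2)) (packet_d2 e k (pi/2))
     = (\<integral>t. pair_density e k \<beta> (1 - c^2) t \<partial>lborel) / e"
proof -
  have e0: "e \<noteq> 0" using e by simp
  have "integrable lborel (\<lambda>x. (packet_d2 e k \<theta> x)^2 - \<beta> * (packet_d1 e k \<theta> x)^2 + (1 - c^2) * (packet e k \<theta> x)^2)"
    for \<theta>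
    using packet_H2[OF e0, of k \<theta>] unfolding H2_triple_def by simp
  then have "I_fun \<beta> c (packet e k 0) (packet_d1 e k 0) (packet_d2 e k 0)
       + I_fun \<beta> c (packet e k (pi/2)) (packet_d1 e k (pi/2)) (packet_d2 e k (pi/2))
      = (\<integral>x. pair_density e k \<beta> (1 - c^2) (e * x) \<partial>lborel)"
    unfolding I_fun_def packet_pair_pointwise[symmetric]
    by (intro Bochner_Integration.integral_add[symmetric])
  also have "\<dots> = (\<integral>t. pair_density e k \<beta> (1 - c^2) t \<partial>lborel) / e"
    using lborel_integral_real_affine[OF e0, of "pair_density e k \<beta> (1 - c^2)" 0] e by simp
  finally show ?thesis .
qed

definition kinetic_const :: "real \<Rightarrow> real \<Rightarrow> real" where
  "kinetic_const k \<beta> = (\<integral>t. (gauss_d2 t)^2 + k^2 * ((gauss t)^2 + (gauss_d2 t)^2)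
      + (4 * k^2 + \<bar>\<beta>\<bar>) * (gauss_d1 t)^2 \<partial>lborel)"

definition mass_const :: real where
  "mass_const = (\<integral>t. (gauss t)^2 \<partial>lborel)"

lemma pair_density_integral_le:
  assumes e: "e^2 \<le> 1"
  shows "(\<integral>t. pair_density e k \<beta> s t \<partial>lborel) \<le> e^2 * kinetic_const k \<beta> + (k^4 - \<beta> * k^2 + s) * mass_const"
proof -
  define A where "A t = (gauss_d2 t)^2 + k^2 * ((gauss t)^2 + (gauss_d2 t)^2) + (4 * k^2 + \<bar>\<beta>\<bar>) * (gauss_d1 t)^2" for t
  have "e^2 * (gauss_d2 t)^2 - 2 * k^2 * (gauss t * gauss_d2 t) + (4 * k^2 - \<beta>) * (gauss_d1 t)^2 \<le> A t" for t
  proof -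
    have "e^2 * (gauss_d2 t)^2 \<le> (gauss_d2 t)^2" using e by (simp add: mult_left_le_one_le)
    moreover have "- 2 * k^2 * (gauss t * gauss_d2 t) \<le> k^2 * ((gauss t)^2 + (gauss_d2 t)^2)"
    proof -
      have "0 \<le> k^2 * (gauss t + gauss_d2 t)^2" by simp
      then show ?thesis by (simp add: power2_eq_square algebra_simps)
    qed
    moreover have "(4 * k^2 - \<beta>) * (gauss_d1 t)^2 \<le> (4 * k^2 + \<bar>\<beta>\<bar>) * (gauss_d1 t)^2"
      by (rule mult_right_mono) auto
    ultimately show ?thesis unfolding A_def by linarith
  qed
  then have pointwise: "pair_density e k \<beta> s t \<le> e^2 * A t + (k^4 - \<beta> * k^2 + s) * (gauss t)^2" for t
    unfolding pair_density_def by (simp add: mult_left_mono)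
  have "integrable lborel A" unfolding A_def using integrable_gauss_squares by simp
  then have "(\<integral>t. pair_density e k \<beta> s t \<partial>lborel) \<le> (\<integral>t. e^2 * A t + (k^4 - \<beta> * k^2 + s) * (gauss t)^2 \<partial>lborel)"
    by (intro integral_mono integrable_pair_density pointwise) (use integrable_gauss_squares in simp)
  also have "\<dots> = e^2 * kinetic_const k \<beta> + (k^4 - \<beta> * k^2 + s) * mass_const"
    unfolding kinetic_const_def mass_const_def A_def[symmetric]
    using \<open>integrable lborel A\<close> integrable_gauss_squares by simp
  finally show ?thesis .
qed

text \<open>Packets are bounded by 1, so their (p+1)-th powers are dominated by their squares.\<close>
lemma integrable_packet_powr:
  assumes p: "p > 1" and e: "e \<noteq> 0"
  shows "integrable lborel (\<lambda>x. \<bar>packet e k \<theta> x\<bar> powr (p + 1))"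
proof (rule Bochner_Integration.integrable_bound)
  show "integrable lborel (\<lambda>x. (packet e k \<theta> x)^2)"
    using packet_H2[OF e] unfolding H2_triple_def by blast
  show "(\<lambda>x. \<bar>packet e k \<theta> x\<bar> powr (p + 1)) \<in> borel_measurable lborel"
  proof -
    have [measurable]: "packet e k \<theta> \<in> borel_measurable borel"
      using borel_measurable_continuous_onI[OF packet_continuous(1)] .
    show ?thesis by measurable
  qed
  have "\<bar>packet e k \<theta> x\<bar> powr (p + 1) \<le> \<bar>packet e k \<theta> x\<bar> powr 2" for x
  proof (rule powr_mono')
    show "\<bar>packet e k \<theta> x\<bar> \<le> 1"
      using packet_envelopes(1)[of e k \<theta> x] gauss_le_1[of "e * x"] gauss_pos[of "e * x"] by simp
  qed (use p in auto)
  then show "AE x in lborel. norm (\<bar>packet e k \<theta> x\<bar> powr (p + 1)) \<le> norm ((packet e k \<theta> x)^2)"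
    by simp
qed

text \<open>On |x| \<le> 1/e the envelope is at least exp(-1/4), and one of |cos|, |sin| is at least
  1/\<surd>2; hence the two phases together carry nonlinear mass of order 1/e.\<close>
definition packet_floor :: "real \<Rightarrow> real" where
  "packet_floor p = (exp (- 1 / 4) / sqrt 2) powr (p + 1)"

lemma packet_floor_pos: "0 < packet_floor p"
  unfolding packet_floor_def by simp

lemma packet_pair_powr_lower:
  assumes p: "p > 1" and x: "\<bar>e * x\<bar> \<le> 1"
  shows "packet_floor p \<le> \<bar>packet e k 0 x\<bar> powr (p + 1) + \<bar>packet e k (pi/2) x\<bar> powr (p + 1)"
proof -
  define a where "a = exp (- 1 / 4) / sqrt 2"
  have "exp (- 1 / 4) \<le> gauss (e * x)"
    using x unfolding gauss_def by (simp add: abs_square_le_1)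
  moreover have "1 / sqrt 2 \<le> \<bar>cos (k * x)\<bar> \<or> 1 / sqrt 2 \<le> \<bar>sin (k * x)\<bar>"
  proof -
    have "1/2 \<le> (cos (k * x))^2 \<or> 1/2 \<le> (sin (k * x))^2"
      using sin_cos_squared_add[of "k * x"] by linarith
    moreover have "1 / sqrt 2 \<le> \<bar>y\<bar>" if "1/2 \<le> y^2" for y :: real
      using real_sqrt_le_mono[OF that] by (simp add: real_sqrt_divide)
    ultimately show ?thesis by blast
  qed
  moreover have "packet e k 0 x = gauss (e * x) * cos (k * x)"
    "packet e k (pi/2) x = gauss (e * x) * sin (k * x)"
    unfolding packet_def by (simp_all add: cos_diff)
  ultimately have "a \<le> \<bar>packet e k 0 x\<bar> \<or> a \<le> \<bar>packet e k (pi/2) x\<bar>"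
    unfolding a_def using gauss_pos[of "e * x"]
    by (auto simp: abs_mult abs_of_pos intro!: mult_mono[of _ _ "1 / sqrt 2", simplified])
  then have "a powr (p + 1) \<le> \<bar>packet e k 0 x\<bar> powr (p + 1) \<or> a powr (p + 1) \<le> \<bar>packet e k (pi/2) x\<bar> powr (p + 1)"
    using p by (auto intro: powr_mono2 simp: a_def)
  then show ?thesis unfolding packet_floor_def a_def[symmetric]
    by (smt (verit) powr_ge_zero)
qed

lemma packet_pair_K_lower:
  assumes p: "p > 1" and e: "e > 0"
  shows "2 * packet_floor p / e \<le> K_fun p (packet e k 0) + K_fun p (packet e k (pi/2))"
proof -
  have e0: "e \<noteq> 0" using e by simp
  have "packet_floor p * indicator {-1/e..1/e} x
      \<le> \<bar>packet e k 0 x\<bar> powr (p + 1) + \<bar>packet e k (pi/2) x\<bar> powr (p + 1)" for x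
  proof (cases "x \<in> {-1/e..1/e}")
    case True
    then have "\<bar>e * x\<bar> \<le> 1" using e by (auto simp: abs_le_iff field_simps)
    with True show ?thesis using packet_pair_powr_lower[OF p] by simp
  qed simp
  then have "(\<integral>x. packet_floor p * indicator {-1/e..1/e} x \<partial>lborel)
      \<le> (\<integral>x. \<bar>packet e k 0 x\<bar> powr (p + 1) + \<bar>packet e k (pi/2) x\<bar> powr (p + 1) \<partial>lborel)"
    by (intro integral_mono) (use integrable_packet_powr[OF p e0] e in simp_all)
  moreover have "(\<integral>x. packet_floor p * indicator {-1/e..1/e} x \<partial>lborel) = 2 * packet_floor p / e"
    using e by simp
  ultimately show ?thesis
    unfolding K_fun_eq[OF p] using integrable_packet_powr[OF p e0] by simp
qed

text \<open>The upper bound for m obtained from the packet pair of width 1/e, tuned to the critical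
  frequency k = sqrt(b/2) with b = max \<beta> 0, where k^4 - \<beta> k^2 + 1 - c^2 equals the gap
  1 - c^2 - b^2/4.\<close>
lemma m_fun_packet_bound:
  assumes p: "p > 1" and e: "e > 0" "e^2 \<le> 1" and bc: "(max \<beta> 0)^2 / 4 \<le> 1 - c^2"
    and k: "k = sqrt (max \<beta> 0 / 2)"
  shows "m_fun p \<beta> c \<le> ((e^2 * kinetic_const k \<beta> + (1 - c^2 - (max \<beta> 0)^2 / 4) * mass_const) / e)
      / (packet_floor p / e) powr (2 / (p + 1))"
proof -
  have e0: "e \<noteq> 0" using e by simp
  have k2: "k^2 = max \<beta> 0 / 2" unfolding k by simp
  have "k^4 = (k^2)^2" by simp
  then have "k^4 = (max \<beta> 0)^2 / 4" unfolding k2 by (simp add: power_divide)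
  then have gap: "k^4 - \<beta> * k^2 + (1 - c^2) = 1 - c^2 - (max \<beta> 0)^2 / 4"
    unfolding k2 by (cases "\<beta> \<le> 0") (auto simp: max_def power2_eq_square field_simps)
  have "m_fun p \<beta> c \<le> (I_fun \<beta> c (packet e k 0) (packet_d1 e k 0) (packet_d2 e k 0)
       + I_fun \<beta> c (packet e k (pi/2)) (packet_d1 e k (pi/2)) (packet_d2 e k (pi/2)))
       / (packet_floor p / e) powr (2 / (p + 1))"
    using packet_pair_K_lower[OF p e(1)] packet_floor_pos e
    by (intro m_fun_le_pair[OF p bc packet_H2[OF e0] packet_H2[OF e0]]) simp_all
  also have "\<dots> \<le> ((e^2 * kinetic_const k \<beta> + (1 - c^2 - (max \<beta> 0)^2 / 4) * mass_const) / e)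
      / (packet_floor p / e) powr (2 / (p + 1))"
    unfolding packet_pair_I[OF e(1)] using pair_density_integral_le[OF e(2), of k \<beta> "1 - c^2"] gap e
    by (intro divide_right_mono) (simp_all add: divide_right_mono)
  finally show ?thesis .
qed

text \<open>Below the threshold m is nonnegative, as the admissible set contains a packet.\<close>
lemma m_fun_nonneg:
  assumes bc: "(max \<beta> 0)^2 / 4 \<le> 1 - c^2"
  shows "0 \<le> m_fun p \<beta> c"
proof (rule m_fun_bounds(1)[OF bc packet_H2])
  have "packet 1 0 0 0 \<noteq> 0" by (simp add: packet_def gauss_def)
  then show "packet 1 0 0 \<noteq> (\<lambda>_. 0)" by auto
qed simp

text \<open>Choosing the width e = \<surd>\<delta>, with \<delta> the gap 1 - c^2 - (max \<beta> 0)^2/4, balances the two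
  parts of the numerator and gives m = O(\<delta>^((p+3)/(2(p+1)))).\<close>
definition m_const :: "real \<Rightarrow> real \<Rightarrow> real" where
  "m_const p \<beta> = (kinetic_const (sqrt (max \<beta> 0 / 2)) \<beta> + mass_const) / packet_floor p powr (2 / (p + 1))"

lemma m_fun_gap_bound:
  assumes p: "p > 1" and \<delta>: "0 < \<delta>" "\<delta> \<le> 1" and gap: "\<delta> = 1 - c^2 - (max \<beta> 0)^2 / 4"
  shows "m_fun p \<beta> c \<le> m_const p \<beta> * \<delta> powr ((p + 3) / (2 * (p + 1)))"
proof -
  define e a where "e = sqrt \<delta>" and "a = 2 / (p + 1)"
  define A B where "A = kinetic_const (sqrt (max \<beta> 0 / 2)) \<beta>" and "B = mass_const"
  have e: "0 < e" "e^2 = \<delta>" unfolding e_def using \<delta> by simp_all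
  have bc: "(max \<beta> 0)^2 / 4 \<le> 1 - c^2" and gap_e: "1 - c^2 - (max \<beta> 0)^2 / 4 = e^2"
    using \<delta> gap e(2) by simp_all
  have "m_fun p \<beta> c \<le> ((e^2 * A + e^2 * B) / e) / (packet_floor p / e) powr a"
    using m_fun_packet_bound[OF p e(1) _ bc refl] e(2) \<delta>(2) unfolding gap_e A_def B_def a_def by simp
  also have "\<dots> = (A + B) * e / (packet_floor p powr a / e powr a)"
    using e(1) packet_floor_pos[of p] by (simp add: powr_divide power2_eq_square field_simps)
  also have "\<dots> = m_const p \<beta> * e powr (1 + a)"
    unfolding m_const_def A_def B_def a_def[symmetric] using e packet_floor_pos[of p]
    by (simp add: powr_add field_simps)
  also have "\<dots> = m_const p \<beta> * \<delta> powr ((p + 3) / (2 * (p + 1)))"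
  proof -
    have "e powr (1 + a) = \<delta> powr ((1 + a) / 2)"
      unfolding e_def using \<delta> by (simp add: powr_half_sqrt[symmetric] powr_powr)
    moreover have "(1 + a) / 2 = (p + 3) / (2 * (p + 1))" unfolding a_def using p by (simp add: field_simps)
    ultimately show ?thesis by simp
  qed
  finally show ?thesis .
qed

text \<open>Below the threshold c < cstar \<beta> the gap \<delta> = 1 - c^2 - (max \<beta> 0)^2/4 = cstar \<beta>^2 - c^2
  is positive, at most 1, and at most 2 (cstar \<beta> - c).\<close>
lemma threshold_gap:
  assumes \<beta>: "\<beta> < 2" and c: "0 < c" "c < cstar \<beta>"
  defines "\<delta> \<equiv> 1 - c^2 - (max \<beta> 0)^2 / 4"
  shows "0 < \<delta>" "\<delta> \<le> 1" "\<delta> \<le> 2 * (cstar \<beta> - c)"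
proof -
  define b cs where "b = max \<beta> 0" and "cs = cstar \<beta>"
  have b: "0 \<le> b" "b^2 < 4" using \<beta> unfolding b_def by (auto intro: power_strict_mono[of _ 2 2, simplified])
  have cs: "cs^2 = 1 - b^2 / 4" "cs \<le> 1" unfolding cs_def cstar_def b_def[symmetric] using b by simp_all
  have \<delta>_eq: "\<delta> = (cs - c) * (cs + c)"
    unfolding \<delta>_def b_def[symmetric] using cs by (simp add: algebra_simps power2_eq_square)
  show "0 < \<delta>" unfolding \<delta>_eq using c cs_def by simp
  show "\<delta> \<le> 1" unfolding \<delta>_def using zero_le_power2[of c] zero_le_power2[of "max \<beta> 0"] by linarith
  have "(cs - c) * (cs + c) \<le> (cs - c) * 2" using c cs cs_def by (intro mult_left_mono) auto
  then show "\<delta> \<le> 2 * (cstar \<beta> - c)" unfolding \<delta>_eq cs_def by simp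
qed

lemma d_fun_bound:
  assumes p: "p > 1" and \<beta>: "\<beta> < 2" and c: "0 < c" "c < cstar \<beta>"
  shows "0 \<le> d_fun p \<beta> c"
    "d_fun p \<beta> c \<le> (p - 1) / (2 * (p + 1)) * m_const p \<beta> powr ((p + 1) / (p - 1))
        * 2 powr ((p + 3) / (2 * (p - 1))) * (cstar \<beta> - c) powr ((p + 3) / (2 * (p - 1)))"
proof -
  define \<delta> where "\<delta> = 1 - c^2 - (max \<beta> 0)^2 / 4"
  define r \<gamma> where "r = (p + 1) / (p - 1)" and "\<gamma> = (p + 3) / (2 * (p - 1))"
  note \<delta> = threshold_gap[OF \<beta> c, folded \<delta>_def]
  show "0 \<le> d_fun p \<beta> c" unfolding d_fun_def using p by simp
  have "m_fun p \<beta> c powr r \<le> (m_const p \<beta> * \<delta> powr ((p + 3) / (2 * (p + 1)))) powr r"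
    using m_fun_gap_bound[OF p \<delta>(1,2) \<delta>_def] m_fun_nonneg[of \<beta> c] \<delta>(1) p unfolding r_def \<delta>_def
    by (intro powr_mono2) simp_all
  also have "\<dots> = m_const p \<beta> powr r * \<delta> powr \<gamma>"
  proof -
    have "(p + 3) / (2 * (p + 1)) * r = \<gamma>"
      unfolding r_def \<gamma>_def using p by (simp add: divide_simps) (simp add: algebra_simps)
    then have "(\<delta> powr ((p + 3) / (2 * (p + 1)))) powr r = \<delta> powr \<gamma>" by (simp only: powr_powr)
    then show ?thesis by (simp add: powr_mult)
  qed
  also have "\<dots> \<le> m_const p \<beta> powr r * ((2 * (cstar \<beta> - c)) powr \<gamma>)"
    using \<delta> p unfolding \<gamma>_def by (intro mult_left_mono powr_mono2) simp_all
  also have "\<dots> = m_const p \<beta> powr r * 2 powr \<gamma> * (cstar \<beta> - c) powr \<gamma>"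
    by (subst powr_mult) (simp only: mult.assoc)
  finally have "(p - 1) / (2 * (p + 1)) * m_fun p \<beta> c powr r
      \<le> (p - 1) / (2 * (p + 1)) * (m_const p \<beta> powr r * 2 powr \<gamma> * (cstar \<beta> - c) powr \<gamma>)"
    by (rule mult_left_mono) (use p in simp)
  then show "d_fun p \<beta> c \<le> (p - 1) / (2 * (p + 1)) * m_const p \<beta> powr ((p + 1) / (p - 1))
        * 2 powr ((p + 3) / (2 * (p - 1))) * (cstar \<beta> - c) powr ((p + 3) / (2 * (p - 1)))"
    unfolding d_fun_def r_def[symmetric] \<gamma>_def[symmetric] by (simp add: mult.assoc)
qed

theorem mainTheorem15:
  fixes p \<beta> :: real
  assumes "p > 1" and "\<beta> < 2"
  shows "(\<lambda>c. d_fun p \<beta> c) \<in> O[at_left (cstar \<beta>)](\<lambda>c. (cstar \<beta> - c) powr ((p + 3) / (2 * (p - 1))))"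
proof (rule bigoI)
  have "0 < cstar \<beta>"
    using assms(2) by (auto simp: cstar_def intro: power_strict_mono[of _ 2 2, simplified])
  then have "\<forall>\<^sub>F c in at_left (cstar \<beta>). 0 < c \<and> c < cstar \<beta>"
    using eventually_at_left_real by force
  then show "\<forall>\<^sub>F c in at_left (cstar \<beta>). norm (d_fun p \<beta> c)
      \<le> (p - 1) / (2 * (p + 1)) * m_const p \<beta> powr ((p + 1) / (p - 1)) * 2 powr ((p + 3) / (2 * (p - 1)))
        * norm ((cstar \<beta> - c) powr ((p + 3) / (2 * (p - 1))))"
    by (rule eventually_mono) (use d_fun_bound[OF assms] in auto)
qed

end
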